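(* Let $s\ge 2$ be an even constant and $\epsilon$ a constant with $0<\epsilon<1/(2s-1)$. For every instance of the class $G^*_\epsilon$ (with $n$ even), the expected number of fitness function evaluations the $(1+1)$~EA needs to find an optimal solution is at least $n^{\Omega(n)}$.
   Context: Partition problem: an instance consists of $n$ jobs with positive processing times $p_1,\dots,p_n$. A solution is $x\in\{0,1\}^n$ (job $i$ on machine $M_1$ if $x_i=0$, on $M_2$ if $x_i=1$), with makespan $f(x)=\max\{\sum_i p_ix_i,\sum_i p_i(1-x_i)\}$ to be minimised; an optimal solution minimises $f$. The class $G^*_\epsilon$: instances with an even number $n$ of jobs, an even number $s=\Theta(1)$ of large jobs, and processing times $p_i=\frac{1}{2s-1}-\frac{\epsilon}{2s}$ for $i\le s$ and $p_i=\frac{s-1}{n-s}\left(\frac{1}{2s-1}+\frac{\epsilon}{2(s-1)}\right)$ for $s<i\le n$, where $0<\epsilon<1/(2s-1)$ is an arbitrarily small constant. The $(1+1)$~EA (minimisation): initialise $x\in\{0,1\}^n$ uniformly at random; in each iteration create $y$ by flipping each bit of $x$ independently with probability $1/n$, and set $x:=y$ if $f(y)\le f(x)$. Asymptotics are as $n\to\infty$. *)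

theory Defs
  imports "HOL-Probability.Probability"
begin

text \<open>Solutions x in {0,1}^n are functions nat => bool that are False outside {..<n};
  x i = True means job i is on machine M2 (x_i = 1). Jobs are indexed 0..n-1.\<close>

definition bitstrings :: "nat \<Rightarrow> (nat \<Rightarrow> bool) set" where
  "bitstrings n = {x. \<forall>i\<ge>n. \<not> x i}"

definition makespan :: "nat \<Rightarrow> (nat \<Rightarrow> real) \<Rightarrow> (nat \<Rightarrow> bool) \<Rightarrow> real" where
  "makespan n p x = max (\<Sum>i\<in>{i. i < n \<and> x i}. p i) (\<Sum>i\<in>{i. i < n \<and> \<not> x i}. p i)"

definition optimal :: "nat \<Rightarrow> (nat \<Rightarrow> real) \<Rightarrow> (nat \<Rightarrow> bool) \<Rightarrow> bool" where
  "optimal n p x \<longleftrightarrow> x \<in> bitstrings n \<and> (\<forall>y\<in>bitstrings n. makespan n p x \<le> makespan n p y)"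

definition ea_init :: "nat \<Rightarrow> (nat \<Rightarrow> bool) pmf" where
  "ea_init n = Pi_pmf {..<n} False (\<lambda>_. bernoulli_pmf (1/2))"

definition ea_mutate :: "nat \<Rightarrow> (nat \<Rightarrow> bool) \<Rightarrow> (nat \<Rightarrow> bool) pmf" where
  "ea_mutate n x = map_pmf (\<lambda>m i. x i \<noteq> m i) (Pi_pmf {..<n} False (\<lambda>_. bernoulli_pmf (1 / real n)))"

definition ea_step :: "nat \<Rightarrow> (nat \<Rightarrow> real) \<Rightarrow> (nat \<Rightarrow> bool) \<Rightarrow> (nat \<Rightarrow> bool) pmf" where
  "ea_step n p x = map_pmf (\<lambda>y. if makespan n p y \<le> makespan n p x then y else x) (ea_mutate n x)"

fun ea_paths :: "nat \<Rightarrow> (nat \<Rightarrow> real) \<Rightarrow> nat \<Rightarrow> (nat \<Rightarrow> bool) list pmf" where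
  "ea_paths n p 0 = map_pmf (\<lambda>x. [x]) (ea_init n)"
| "ea_paths n p (Suc t) = ea_paths n p t \<bind> (\<lambda>xs. map_pmf (\<lambda>y. xs @ [y]) (ea_step n p (last xs)))"

text \<open>Let T be the number of iterations until the first optimal search point
  (T = min {t. x_t optimal}). The number of fitness evaluations is 1 + T
  (one for the initial point, one per iteration), and
  E[T] = sum_{t>=0} Pr[T > t] = sum_t Pr[none of x_0..x_t is optimal].\<close>
definition ea_expected_evals :: "nat \<Rightarrow> (nat \<Rightarrow> real) \<Rightarrow> ennreal" where
  "ea_expected_evals n p = 1 + (\<Sum>t. ennreal (measure_pmf.prob (ea_paths n p t)
       {xs. \<forall>x\<in>set xs. \<not> optimal n p x}))"

text \<open>Processing times of the instance of G*_eps with n jobs and s large jobs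
  (jobs 0..s-1 are the large ones, i.e. paper indices 1..s).\<close>
definition G_star_p :: "nat \<Rightarrow> real \<Rightarrow> nat \<Rightarrow> nat \<Rightarrow> real" where
  "G_star_p s \<epsilon> n i = (if i < s then 1 / (2 * real s - 1) - \<epsilon> / (2 * real s)
      else (real s - 1) / (real n - real s) * (1 / (2 * real s - 1) + \<epsilon> / (2 * (real s - 1))))"

end

theory Submission
  imports Defs "HOL-Real_Asymp.Real_Asymp"
begin

(* Let x* put exactly the s large jobs on M2. Its makespan s a exceeds 1/2, and since s and n - s
   are even a perfect split exists, so x* is not optimal. But every other solution within Hamming
   distance K = Theta(n) of x* is strictly worse: if no large job moves, M2 only gains load; if one
   does, M1 stays above s a unless small jobs of total time 1 - (2 s - 1) a, i.e. linearly many,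
   move to M2. The (1+1) EA starts in x* with probability 2^-n and leaves it in one iteration
   with probability at most C(n, K) n^-K <= 2^n n^-K, so it expects at least n^K / 4^n
   = n^Omega(n) evaluations. *)

lemma prob_Pi_bernoulli_all_true:
  assumes "finite I" "A \<subseteq> I" "0 \<le> r" "r \<le> 1"
  shows "measure_pmf.prob (Pi_pmf I False (\<lambda>_. bernoulli_pmf r)) {m. \<forall>i\<in>A. m i} = r ^ card A"
proof -
  define B where "B i = (if i \<in> A then {True} else UNIV)" for i
  have "{m. \<forall>i\<in>A. m i} = Pi I B"
    using assms(2) by (auto simp: B_def Pi_def)
  then have "measure_pmf.prob (Pi_pmf I False (\<lambda>_. bernoulli_pmf r)) {m. \<forall>i\<in>A. m i}
      = (\<Prod>i\<in>I. measure_pmf.prob (bernoulli_pmf r) (B i))"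
    using assms(1) by (simp add: measure_Pi_pmf_Pi)
  also have "\<dots> = (\<Prod>i\<in>I. if i \<in> A then r else 1)"
    using assms(3,4) by (intro prod.cong) (auto simp: B_def measure_pmf_single)
  also have "\<dots> = r ^ card A"
    using assms(1,2) by (simp add: prod.If_cases Int_absorb1)
  finally show ?thesis .
qed

lemma prob_Pi_bernoulli_card_ge:
  assumes "finite I" "0 \<le> r" "r \<le> 1"
  shows "measure_pmf.prob (Pi_pmf I False (\<lambda>_. bernoulli_pmf r)) {m. K \<le> card {i\<in>I. m i}}
           \<le> real (card I choose K) * r ^ K"
proof -
  let ?P = "Pi_pmf I False (\<lambda>_. bernoulli_pmf r)"
  define S where "S = {A. A \<subseteq> I \<and> card A = K}"
  have "finite S"
    unfolding S_def using assms(1) by (auto intro: finite_subset[of _ "Pow I"])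
  have "{m. K \<le> card {i\<in>I. m i}} \<subseteq> (\<Union>A\<in>S. {m. \<forall>i\<in>A. m i})"
  proof
    fix m assume "m \<in> {m. K \<le> card {i\<in>I. m i}}"
    then obtain A where "A \<subseteq> {i\<in>I. m i}" "card A = K"
      using obtain_subset_with_card_n by (metis mem_Collect_eq)
    then show "m \<in> (\<Union>A\<in>S. {m. \<forall>i\<in>A. m i})"
      by (auto simp: S_def)
  qed
  then have "measure_pmf.prob ?P {m. K \<le> card {i\<in>I. m i}}
      \<le> measure_pmf.prob ?P (\<Union>A\<in>S. {m. \<forall>i\<in>A. m i})"
    by (intro measure_pmf.finite_measure_mono) auto
  also have "\<dots> \<le> (\<Sum>A\<in>S. measure_pmf.prob ?P {m. \<forall>i\<in>A. m i})"
    using \<open>finite S\<close> by (intro measure_UNION_le) auto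
  also have "\<dots> = (\<Sum>A\<in>S. r ^ K)"
    using assms by (intro sum.cong refl) (auto simp: S_def prob_Pi_bernoulli_all_true)
  also have "\<dots> = real (card I choose K) * r ^ K"
    using n_subsets[OF assms(1), of K] by (simp add: S_def)
  finally show ?thesis .
qed

lemma prob_ea_step_stay_ge:
  assumes "0 < n" "x \<in> bitstrings n"
    and worse: "\<And>y. y \<in> bitstrings n \<Longrightarrow> y \<noteq> x \<Longrightarrow> card {i. i < n \<and> x i \<noteq> y i} < K
                  \<Longrightarrow> makespan n p x < makespan n p y"
  shows "1 - real (n choose K) * (1 / real n) ^ K \<le> measure_pmf.prob (ea_step n p x) {x}"
proof -
  let ?P = "Pi_pmf {..<n} False (\<lambda>_. bernoulli_pmf (1 / real n))"
  define step where
    "step m = (let y = (\<lambda>i. x i \<noteq> m i) in if makespan n p y \<le> makespan n p x then y else x)" for m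
  have "measure_pmf.prob (ea_step n p x) {x} = measure_pmf.prob ?P (step -` {x})"
    unfolding ea_step_def ea_mutate_def map_pmf_comp measure_map_pmf step_def Let_def o_def ..
  moreover have "{m. card {i. i < n \<and> m i} < K} \<inter> set_pmf ?P \<subseteq> step -` {x}"
  proof
    fix m assume m: "m \<in> {m. card {i. i < n \<and> m i} < K} \<inter> set_pmf ?P"
    define y where "y i = (x i \<noteq> m i)" for i
    have "\<forall>i\<ge>n. \<not> m i"
      using m set_Pi_pmf_subset[of "{..<n}" False] by fastforce
    then have "y \<in> bitstrings n"
      using assms(2) by (simp add: bitstrings_def y_def)
    moreover have "{i. i < n \<and> x i \<noteq> y i} = {i. i < n \<and> m i}"
      by (auto simp: y_def)
    then have "card {i. i < n \<and> x i \<noteq> y i} < K"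
      using m by simp
    ultimately have "y = x \<or> makespan n p x < makespan n p y"
      using worse by blast
    then show "m \<in> step -` {x}"
      by (auto simp: step_def y_def[abs_def])
  qed
  then have "measure_pmf.prob ?P ({m. card {i. i < n \<and> m i} < K} \<inter> set_pmf ?P)
      \<le> measure_pmf.prob ?P (step -` {x})"
    by (intro measure_pmf.finite_measure_mono) auto
  moreover have "measure_pmf.prob ?P ({m. card {i. i < n \<and> m i} < K} \<inter> set_pmf ?P)
      = 1 - measure_pmf.prob ?P {m. K \<le> card {i. i < n \<and> m i}}"
    by (subst measure_Int_set_pmf, subst measure_pmf.prob_compl[symmetric])
       (auto intro!: arg_cong[where f = "measure_pmf.prob ?P"])
  moreover have "measure_pmf.prob ?P {m. K \<le> card {i. i < n \<and> m i}} \<le> real (n choose K) * (1 / real n) ^ K"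
    using prob_Pi_bernoulli_card_ge[of "{..<n}" "1 / real n" K] assms(1) by simp
  ultimately show ?thesis
    by linarith
qed

lemma prob_ea_paths_stay_ge:
  assumes "x \<in> bitstrings n" "0 \<le> q" and stay: "q \<le> measure_pmf.prob (ea_step n p x) {x}"
  shows "(1/2) ^ n * q ^ t \<le> measure_pmf.prob (ea_paths n p t) {xs. xs \<noteq> [] \<and> set xs \<subseteq> {x}}"
proof (induction t)
  case 0
  have "measure_pmf.prob (ea_paths n p 0) {xs. xs \<noteq> [] \<and> set xs \<subseteq> {x}} = pmf (ea_init n) x"
    by (auto simp: measure_pmf_single intro!: arg_cong[where f = "measure_pmf.prob (ea_init n)"])
  also have "\<dots> = (1/2) ^ n"
    using assms(1) unfolding ea_init_def bitstrings_def by (subst pmf_Pi) auto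
  finally show ?case
    by simp
next
  case (Suc t)
  define E where "E = {xs. xs \<noteq> [] \<and> set xs \<subseteq> {x}}"
  let ?extend = "\<lambda>xs. map_pmf (\<lambda>y. xs @ [y]) (ea_step n p (last xs))"
  have "ennreal q * indicator E xs \<le> emeasure (?extend xs) E" for xs
  proof (cases "xs \<in> E")
    case True
    then have "last xs = x" "{x} \<subseteq> (\<lambda>y. xs @ [y]) -` E"
      using last_in_set by (fastforce simp: E_def)+
    then have "emeasure (ea_step n p x) {x} \<le> emeasure (?extend xs) E"
      by (simp add: emeasure_mono)
    then show ?thesis
      using True stay by (simp add: measure_pmf.emeasure_eq_measure)
  qed simp
  then have "(\<integral>\<^sup>+xs. ennreal q * indicator E xs \<partial>ea_paths n p t)
      \<le> (\<integral>\<^sup>+xs. emeasure (?extend xs) E \<partial>ea_paths n p t)"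
    by (intro nn_integral_mono)
  also have "\<dots> = emeasure (ea_paths n p (Suc t)) E"
    by simp
  finally have "ennreal (q * measure_pmf.prob (ea_paths n p t) E) \<le> emeasure (ea_paths n p (Suc t)) E"
    using assms(2) by (simp add: nn_integral_cmult_indicator measure_pmf.emeasure_eq_measure ennreal_mult)
  then have "q * measure_pmf.prob (ea_paths n p t) E \<le> measure_pmf.prob (ea_paths n p (Suc t)) E"
    by (simp add: measure_pmf.emeasure_eq_measure)
  moreover have "q * ((1/2) ^ n * q ^ t) \<le> q * measure_pmf.prob (ea_paths n p t) E"
    using Suc.IH assms(2) by (intro mult_left_mono) (auto simp: E_def)
  ultimately show ?case
    by (simp add: E_def algebra_simps)
qed

lemma ea_expected_evals_ge_trap:
  assumes "x \<in> bitstrings n" "\<not> optimal n p x" "0 \<le> q" "q < 1"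
    and "q \<le> measure_pmf.prob (ea_step n p x) {x}"
  shows "ennreal ((1/2) ^ n / (1 - q)) \<le> ea_expected_evals n p"
proof -
  have "(\<lambda>t. (1/2) ^ n * q ^ t) sums ((1/2) ^ n * (1 / (1 - q)))"
    using assms(3,4) by (intro sums_mult geometric_sums) auto
  then have "ennreal ((1/2) ^ n / (1 - q)) = (\<Sum>t. ennreal ((1/2) ^ n * q ^ t))"
    using assms(3) by (subst suminf_ennreal_eq) auto
  also have "\<dots> \<le> (\<Sum>t. ennreal (measure_pmf.prob (ea_paths n p t) {xs. \<forall>y\<in>set xs. \<not> optimal n p y}))"
  proof (intro suminf_le summableI ennreal_leI)
    fix t
    have "measure_pmf.prob (ea_paths n p t) {xs. xs \<noteq> [] \<and> set xs \<subseteq> {x}}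
        \<le> measure_pmf.prob (ea_paths n p t) {xs. \<forall>y\<in>set xs. \<not> optimal n p y}"
      using assms(2) by (intro measure_pmf.finite_measure_mono) auto
    then show "(1/2) ^ n * q ^ t \<le> measure_pmf.prob (ea_paths n p t) {xs. \<forall>y\<in>set xs. \<not> optimal n p y}"
      using prob_ea_paths_stay_ge[OF assms(1,3,5), of t] by linarith
  qed
  also have "\<dots> \<le> ea_expected_evals n p"
    unfolding ea_expected_evals_def by simp
  finally show ?thesis .
qed

lemma powr_le_pow_div_four_pow:
  fixes n K :: nat and c :: real
  assumes "0 < n" "2 * c * real n \<le> real K" and large_n: "4 ^ n \<le> real n powr (c * real n)"
  shows "2 ^ n \<le> real n ^ K" "real n powr (c * real n) \<le> real n ^ K / 4 ^ n"
proof -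
  define X where "X = real n powr (c * real n)"
  have "X * X = real n powr (2 * c * real n)"
    unfolding X_def by (simp add: mult.assoc flip: powr_add)
  also have "\<dots> \<le> real n powr real K"
    using assms(1,2) by (intro powr_mono) auto
  also have "\<dots> = real n ^ K"
    using assms(1) by (simp add: powr_realpow)
  finally have "X * X \<le> real n ^ K" .
  moreover have "4 ^ n \<le> X" "(1::real) \<le> 4 ^ n"
    using large_n by (simp_all add: X_def)
  ultimately have X_le: "X * 4 ^ n \<le> real n ^ K"
    by (smt (verit) mult_left_mono)
  then show "X \<le> real n ^ K / 4 ^ n"
    by (simp add: field_simps)
  have "2 ^ n \<le> (4::real) ^ n"
    by (intro power_mono) auto
  moreover have "4 ^ n \<le> X * 4 ^ n"
    using \<open>4 ^ n \<le> X\<close> \<open>1 \<le> 4 ^ n\<close> mult_right_mono[of 1 X "4 ^ n"] by linarith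
  ultimately show "2 ^ n \<le> real n ^ K"
    using X_le by linarith
qed

lemma bitstrings_eqI:
  assumes "x \<in> bitstrings n" "y \<in> bitstrings n" "\<And>i. i < n \<Longrightarrow> x i = y i"
  shows "x = y"
proof
  fix i
  show "x i = y i"
    using assms by (cases "i < n") (auto simp: bitstrings_def)
qed

definition two_valued :: "nat \<Rightarrow> real \<Rightarrow> real \<Rightarrow> nat \<Rightarrow> real" where
  "two_valued s a b i = (if i < s then a else b)"

lemma sum_two_valued:
  assumes "finite X"
  shows "(\<Sum>i\<in>X. two_valued s a b i) = a * card (X \<inter> {..<s}) + b * card (X - {..<s})"
proof -
  have "(\<Sum>i\<in>X. two_valued s a b i)
      = (\<Sum>i\<in>X \<inter> {..<s}. two_valued s a b i) + (\<Sum>i\<in>X - {..<s}. two_valued s a b i)"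
    using assms by (rule sum.Int_Diff)
  also have "\<dots> = (\<Sum>i\<in>X \<inter> {..<s}. a) + (\<Sum>i\<in>X - {..<s}. b)"
    by (intro arg_cong2[where f = "(+)"] sum.cong) (auto simp: two_valued_def)
  finally show ?thesis
    by simp
qed

lemma sum_ones_plus_sum_zeros:
  fixes n :: nat
  shows "(\<Sum>i\<in>{i. i < n \<and> x i}. p i) + (\<Sum>i\<in>{i. i < n \<and> \<not> x i}. p i) = (\<Sum>i<n. p i)"
proof -
  have "{..<n} = {i. i < n \<and> x i} \<union> {i. i < n \<and> \<not> x i}"
    by auto
  moreover have "sum p ({i. i < n \<and> x i} \<union> {i. i < n \<and> \<not> x i})
      = (\<Sum>i\<in>{i. i < n \<and> x i}. p i) + (\<Sum>i\<in>{i. i < n \<and> \<not> x i}. p i)"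
    by (rule sum.union_disjoint) auto
  ultimately show ?thesis
    by simp
qed

locale two_job_sizes =
  fixes s n :: nat and a b :: real
  assumes s_less_n: "s < n" and large_pos: "0 < a" and small_pos: "0 < b"
    and total_time: "real s * a + real (n - s) * b = 1"
    and large_over_half: "1 < 2 * real s * a"
begin

abbreviation p :: "nat \<Rightarrow> real" where
  "p \<equiv> two_valued s a b"

lemma load_complement: "(\<Sum>i\<in>{i. i < n \<and> \<not> y i}. p i) = 1 - (\<Sum>i\<in>{i. i < n \<and> y i}. p i)"
proof -
  have "{..<n} \<inter> {..<s} = {..<s}" "{..<n} - {..<s} = {s..<n}"
    using s_less_n by auto
  then have "(\<Sum>i<n. p i) = 1"
    using total_time by (simp add: sum_two_valued mult.commute)
  then show ?thesis
    using sum_ones_plus_sum_zeros[where n = n and x = y and p = p] by linarith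
qed

lemma makespan_separated: "makespan n p (\<lambda>i. i < s) = real s * a"
proof -
  have "{i. i < n \<and> i < s} = {..<s}"
    using s_less_n by auto
  then have "(\<Sum>i\<in>{i. i < n \<and> i < s}. p i) = real s * a"
    by (simp add: two_valued_def)
  then show ?thesis
    using load_complement[of "\<lambda>i. i < s"] large_over_half by (simp add: makespan_def)
qed

lemma separated_not_optimal:
  assumes "even s" "even n"
  shows "\<not> optimal n p (\<lambda>i. i < s)"
proof -
  define y where "y i \<longleftrightarrow> i < s div 2 \<or> (s \<le> i \<and> i < s + (n - s) div 2)" for i
  have "y \<in> bitstrings n"
    using s_less_n assms by (auto simp: y_def bitstrings_def)
  have "{i. i < n \<and> y i} \<inter> {..<s} = {..<s div 2}" "{i. i < n \<and> y i} - {..<s} = {s..<s + (n - s) div 2}"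
    using s_less_n by (auto simp: y_def)
  moreover obtain k where "n - s = 2 * k"
    using assms s_less_n by (metis dvd_diff_nat evenE)
  then have "real (s div 2) = real s / 2" "real ((n - s) div 2) = real (n - s) / 2"
    using assms(1) by (auto elim!: evenE)
  ultimately have "(\<Sum>i\<in>{i. i < n \<and> y i}. p i) = 1 / 2"
    using total_time by (simp add: sum_two_valued field_simps)
  then have "makespan n p y = 1 / 2"
    using load_complement[of y] by (simp add: makespan_def)
  then have "makespan n p y < makespan n p (\<lambda>i. i < s)"
    using makespan_separated large_over_half by simp
  then show ?thesis
    using \<open>y \<in> bitstrings n\<close> by (force simp: optimal_def)
qed

lemma makespan_few_flips_worse:
  assumes "y \<in> bitstrings n" "y \<noteq> (\<lambda>i. i < s)"
    and few: "real (card {i. i < n \<and> (i < s) \<noteq> y i}) * b < 1 - (2 * real s - 1) * a"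
  shows "makespan n p (\<lambda>i. i < s) < makespan n p y"
proof -
  define M where "M = {i. i < n \<and> (i < s) \<noteq> y i}"
  define load where "load = (\<Sum>i\<in>{i. i < n \<and> y i}. p i)"
  have "finite M"
    by (simp add: M_def)
  have "{i. i < n \<and> y i} \<inter> {..<s} = {..<s} - M" "{i. i < n \<and> y i} - {..<s} = M - {..<s}"
    using s_less_n by (auto simp: M_def)
  then have load_eq: "load = a * card ({..<s} - M) + b * card (M - {..<s})"
    by (simp add: load_def sum_two_valued)
  have "M \<noteq> {}"
    using assms(1,2) s_less_n bitstrings_eqI[of "\<lambda>i. i < s" n y] by (auto simp: M_def bitstrings_def)
  have "real s * a < makespan n p y"
  proof (cases "M \<inter> {..<s} = {}")
    case True
    then have "{..<s} - M = {..<s}" "M - {..<s} \<noteq> {}"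
      using \<open>M \<noteq> {}\<close> by auto
    then have "1 \<le> card (M - {..<s})"
      using \<open>finite M\<close> by (simp add: Suc_le_eq card_gt_0_iff)
    then have "real s * a < load"
      using load_eq \<open>{..<s} - M = {..<s}\<close> small_pos by (simp add: algebra_simps)
    then show ?thesis
      by (simp add: makespan_def load_def)
  next
    case False
    then have "card ({..<s} - M) < s"
      by (metis Diff_disjoint Diff_subset card_lessThan card_seteq finite_lessThan inf_commute
          not_le)
    then have "real (card ({..<s} - M)) \<le> real s - 1"
      by linarith
    moreover have "card (M - {..<s}) \<le> card M"
      using \<open>finite M\<close> by (intro card_mono) auto
    ultimately have "load \<le> a * (real s - 1) + b * card M"
      unfolding load_eq using large_pos small_pos by (intro add_mono mult_left_mono) auto
    then have "load < 1 - real s * a"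
      using few by (simp add: M_def algebra_simps)
    then show ?thesis
      using load_complement[of y] by (simp add: makespan_def load_def)
  qed
  then show ?thesis
    using makespan_separated by simp
qed

lemma ea_expected_evals_ge_pow:
  assumes "even s" "even n"
    and few: "\<And>d. d < K \<Longrightarrow> real d * b < 1 - (2 * real s - 1) * a"
    and "2 ^ n \<le> real n ^ K"
  shows "ennreal (real n ^ K / 4 ^ n) \<le> ea_expected_evals n p"
proof -
  define q where "q = 1 - 2 ^ n / real n ^ K"
  have "0 < n"
    using s_less_n by simp
  have "(\<lambda>i. i < s) \<in> bitstrings n"
    using s_less_n by (simp add: bitstrings_def)
  have "1 - real (n choose K) * (1 / real n) ^ K \<le> measure_pmf.prob (ea_step n p (\<lambda>i. i < s)) {\<lambda>i. i < s}"
    using \<open>0 < n\<close> \<open>(\<lambda>i. i < s) \<in> bitstrings n\<close>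
    by (rule prob_ea_step_stay_ge) (use makespan_few_flips_worse few in auto)
  moreover have "real (n choose K) * (1 / real n) ^ K \<le> 2 ^ n / real n ^ K"
    using binomial_le_pow2[of n K] by (simp add: power_one_over divide_right_mono flip: of_nat_le_iff)
  ultimately have "q \<le> measure_pmf.prob (ea_step n p (\<lambda>i. i < s)) {\<lambda>i. i < s}"
    unfolding q_def by linarith
  moreover have "0 \<le> q" "q < 1"
    using assms(4) \<open>0 < n\<close> by (simp_all add: q_def)
  ultimately have "ennreal ((1/2) ^ n / (1 - q)) \<le> ea_expected_evals n p"
    using \<open>(\<lambda>i. i < s) \<in> bitstrings n\<close> separated_not_optimal[OF assms(1,2)]
    by (intro ea_expected_evals_ge_trap) auto
  moreover have "(1/2) ^ n / (1 - q) = real n ^ K / 4 ^ n"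
    by (simp add: q_def power_one_over field_simps flip: power_mult_distrib)
  ultimately show ?thesis
    by simp
qed

lemma ea_expected_evals_ge_powr:
  assumes "even s" "even n" "2 * s \<le> n"
    and gap_pos: "0 < 1 - (2 * real s - 1) * a"
    and large_n: "4 ^ n \<le> real n powr ((1 - (2 * real s - 1) * a) / 4 * real n)"
  shows "ennreal (real n powr ((1 - (2 * real s - 1) * a) / 4 * real n)) \<le> ea_expected_evals n p"
proof -
  define g where "g = 1 - (2 * real s - 1) * a"
  define K where "K = nat \<lceil>g / b\<rceil>"
  have few: "real d * b < g" if "d < K" for d
  proof -
    have "int d < \<lceil>g / b\<rceil>"
      using that unfolding K_def by (simp only: zless_nat_eq_int_zless)
    then have "real d < g / b"
      by (metis less_ceiling_iff of_int_of_nat_eq)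
    then show ?thesis
      using small_pos by (simp add: field_simps)
  qed
  have "real (n - s) * b \<le> 1"
    using total_time large_pos by (smt (verit) of_nat_0_le_iff mult_nonneg_nonneg)
  moreover have "0 < g"
    using gap_pos by (simp add: g_def)
  ultimately have "g * (real (n - s) * b) \<le> g"
    by (simp add: mult_left_le)
  then have "g * real (n - s) \<le> g / b"
    using small_pos by (simp add: field_simps)
  moreover have "g / 2 * real n \<le> g * real (n - s)"
    using assms(3) \<open>0 < g\<close> by (simp add: of_nat_diff field_simps)
  moreover have "g / b \<le> real K"
    unfolding K_def by (rule real_nat_ceiling_ge)
  ultimately have "2 * (g / 4) * real n \<le> real K"
    by linarith
  then have "2 ^ n \<le> real n ^ K" "real n powr (g / 4 * real n) \<le> real n ^ K / 4 ^ n"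
    using s_less_n large_n powr_le_pow_div_four_pow[of n "g / 4" K] by (simp_all add: g_def)
  then have "ennreal (real n powr (g / 4 * real n)) \<le> ennreal (real n ^ K / 4 ^ n)"
    by (intro ennreal_leI)
  also have "\<dots> \<le> ea_expected_evals n p"
    using assms(1,2) few \<open>2 ^ n \<le> real n ^ K\<close> by (intro ea_expected_evals_ge_pow) (auto simp: g_def)
  finally show ?thesis
    by (simp add: g_def)
qed

end

lemma two_job_sizes_G_star:
  assumes "2 \<le> s" "s < n" "0 < \<epsilon>" "\<epsilon> < 1 / (2 * real s - 1)"
  shows "two_job_sizes s n (1 / (2 * real s - 1) - \<epsilon> / (2 * real s))
           ((real s - 1) / (real n - real s) * (1 / (2 * real s - 1) + \<epsilon> / (2 * (real s - 1))))"
    (is "two_job_sizes s n ?a ?b")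
proof
  have s: "2 \<le> real s" and ns: "real s < real n"
    using assms(1,2) by simp_all
  then have nz: "2 * real s - 1 \<noteq> 0" "real s - 1 \<noteq> 0" "real s \<noteq> 0"
    by auto
  show "s < n"
    by (rule assms(2))
  have "\<epsilon> / (2 * real s) < \<epsilon>"
    using assms(3) s by (simp add: field_simps)
  then show "0 < ?a"
    using assms(4) by linarith
  show "0 < ?b"
    using s ns assms(3) by (intro mult_pos_pos add_pos_pos divide_pos_pos) auto
  have "(real s - 1) * (\<epsilon> / (2 * (real s - 1))) = \<epsilon> / 2"
    using nz by (simp add: field_simps)
  then have "real (n - s) * ?b = (real s - 1) / (2 * real s - 1) + \<epsilon> / 2"
    using ns assms(2) by (simp add: of_nat_diff distrib_left)
  moreover have "real s * ?a = real s / (2 * real s - 1) - \<epsilon> / 2"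
    using nz by (simp add: field_simps)
  moreover have "real s / (2 * real s - 1) + (real s - 1) / (2 * real s - 1) = 1"
    using nz by (simp flip: add_divide_distrib)
  ultimately show "real s * ?a + real (n - s) * ?b = 1"
    by linarith
  have "2 * real s * ?a = 1 + 1 / (2 * real s - 1) - \<epsilon>"
    using nz by (simp add: field_simps)
  then show "1 < 2 * real s * ?a"
    using assms(4) by linarith
qed

theorem theorem2:
  fixes s :: nat and \<epsilon> :: real
  assumes "even s" and "s \<ge> 2"
    and "0 < \<epsilon>" and "\<epsilon> < 1 / (2 * real s - 1)"
  shows "\<exists>c>0. \<exists>N. \<forall>n\<ge>N. even n \<longrightarrow>
           ennreal (real n powr (c * real n)) \<le> ea_expected_evals n (G_star_p s \<epsilon> n)"
proof -
  define a where "a = 1 / (2 * real s - 1) - \<epsilon> / (2 * real s)"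
  define b where "b n = (real s - 1) / (real n - real s) * (1 / (2 * real s - 1) + \<epsilon> / (2 * (real s - 1)))"
    for n :: nat
  define gap where "gap = 1 - (2 * real s - 1) * a"
  have "gap = (2 * real s - 1) * \<epsilon> / (2 * real s)"
    using assms(2) by (simp add: gap_def a_def field_simps)
  then have "0 < gap"
    using assms(2,3) by simp
  then have "\<forall>\<^sub>F n in sequentially. 2 * s \<le> n \<and> 4 ^ n \<le> real n powr (gap / 4 * real n)"
    by (intro eventually_conj eventually_ge_at_top) real_asymp
  then obtain N where N: "2 * s \<le> n" "4 ^ n \<le> real n powr (gap / 4 * real n)" if "N \<le> n" for n
    unfolding eventually_sequentially by blast
  show ?thesis
  proof (intro exI conjI allI impI)
    fix n assume "N \<le> n" "even n"
    then have "s < n"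
      using N(1) assms(2) by fastforce
    have "two_job_sizes s n a (b n)"
      unfolding a_def b_def by (rule two_job_sizes_G_star[OF assms(2) \<open>s < n\<close> assms(3,4)])
    moreover have "G_star_p s \<epsilon> n = two_valued s a (b n)"
      by (simp add: fun_eq_iff G_star_p_def two_valued_def a_def b_def)
    ultimately show "ennreal (real n powr (gap / 4 * real n)) \<le> ea_expected_evals n (G_star_p s \<epsilon> n)"
      using two_job_sizes.ea_expected_evals_ge_powr[of s n a "b n"] N \<open>N \<le> n\<close> \<open>even n\<close> assms(1) \<open>0 < gap\<close>
      by (simp add: gap_def)
  qed (use \<open>0 < gap\<close> in simp)
qed

end
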